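(* Let $\mathbb{F}_q$ be a finite field of characteristic $p$. For every $u\in\mathbb{F}_q$ with $u^3\ne27$, $$\#\mathcal{I}_{\mathrm{H},u}=\begin{cases}1,& q\equiv0,2\pmod3,\\ 4,& q\equiv1\pmod3,\ p\ne2,\ A_u=0,\\ 6,& q\equiv1\pmod3,\ p\ne2,\ B_u=0,\\ 12,& q\equiv1\pmod3 \text{ and } A_uB_u\ne0.\end{cases}$$
   Context: For $u\in\mathbb{F}_q$ with $u^3\ne27$, the Hessian curve $E_{\mathrm{H},u}$ is the elliptic curve $X^3+Y^3+1=uXY$. Two such curves are $\mathbb{F}_q$-isomorphic if they are birationally equivalent over $\mathbb{F}_q$ (equivalently, their Weierstrass models are isomorphic via a Weierstrass change of variables with coefficients in $\mathbb{F}_q$). Define $\mathcal{I}_{\mathrm{H},u}=\{v\in\mathbb{F}_q: v^3\ne27,\ E_{\mathrm{H},u}\cong_{\mathbb{F}_q}E_{\mathrm{H},v}\}$. For $p\ne3$ put $A_u=-u(u^3+216)/3$ and $B_u=(u^6-540u^3-5832)/27$. *)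

theory Defs
  imports Main
begin

text \<open>Weierstrass equations y^2 + a1 x y + a3 y = x^3 + a2 x^2 + a4 x + a6,
  represented by their coefficient tuple (a1, a2, a3, a4, a6).\<close>

type_synonym 'a weier = "'a \<times> 'a \<times> 'a \<times> 'a \<times> 'a"

text \<open>Two Weierstrass equations are isomorphic over the base field if they are related by
  an admissible change of variables x = w^2 x' + r, y = w^3 y' + s w^2 x' + t with
  r, s, t, w in the field and w nonzero (Silverman, Table 3.1): here E' = (b1,...,b6) is the
  transform of E = (a1,...,a6).\<close>

definition weier_iso :: "'a::field weier \<Rightarrow> 'a weier \<Rightarrow> bool" where
  "weier_iso E E' \<longleftrightarrow>
     (case E of (a1, a2, a3, a4, a6) \<Rightarrow> case E' of (b1, b2, b3, b4, b6) \<Rightarrow>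
       (\<exists>r s t w. w \<noteq> 0 \<and>
          w * b1 = a1 + 2 * s \<and>
          w ^ 2 * b2 = a2 - s * a1 + 3 * r - s ^ 2 \<and>
          w ^ 3 * b3 = a3 + r * a1 + 2 * t \<and>
          w ^ 4 * b4 = a4 - s * a3 + 2 * r * a2 - (t + r * s) * a1 + 3 * r ^ 2 - 2 * s * t \<and>
          w ^ 6 * b6 = a6 + r * a4 + r ^ 2 * a2 + r ^ 3 - t * a3 - t ^ 2 - r * t * a1))"

text \<open>A Weierstrass model of the Hessian curve X^3 + Y^3 + 1 = u X Y (u^3 \<noteq> 27), obtained
  from it by a projective linear change of coordinates defined over the base field, sending the
  flex (1:-1:0) to the point at infinity.\<close>

definition hessian_weier :: "'a::field \<Rightarrow> 'a weier" where
  "hessian_weier u =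
     (if CHAR('a) = 3 then (u, 0, u ^ 2, 0, 0)
      else (3 * u, - 9 * u ^ 2, - 9 * (u ^ 3 - 27), 27 * u * (u ^ 3 - 27), - 27 * (u ^ 3 - 27) ^ 2))"

definition hessian_iso :: "'a::field \<Rightarrow> 'a \<Rightarrow> bool" where
  "hessian_iso u v \<longleftrightarrow> weier_iso (hessian_weier u) (hessian_weier v)"

definition I_H :: "'a::field \<Rightarrow> 'a set" where
  "I_H u = {v. v ^ 3 \<noteq> 27 \<and> hessian_iso u v}"

definition A_coef :: "'a::field \<Rightarrow> 'a" where
  "A_coef u = - u * (u ^ 3 + 216) / 3"

definition B_coef :: "'a::field \<Rightarrow> 'a" where
  "B_coef u = (u ^ 6 - 540 * u ^ 3 - 5832) / 27"

end

theory Submission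
  imports Defs "HOL-Computational_Algebra.Primes"
begin

text \<open>When \<open>3 \<noteq> 0\<close>, a change of variables scales \<open>c\<^sub>4, c\<^sub>6, \<Delta>\<close> by \<open>w\<^sup>4, w\<^sup>6, w\<^sup>1\<^sup>2\<close>,
  so isomorphic Hessian curves have the same \<open>j = c\<^sub>4\<^sup>3 / \<Delta>\<close>, which for \<open>E\<^sub>u\<close> is
  \<open>(u (u\<^sup>3 + 216))\<^sup>3 / (u\<^sup>3 - 27)\<^sup>3\<close>. After adjoining a primitive cube root of unity
  \<open>\<omega>\<close>, the equation \<open>j(E\<^sub>u) = j(E\<^sub>v)\<close> splits into twelve linear factors in \<open>v\<close>:
  \<open>v = z x\<close> with \<open>z\<^sup>3 = 1\<close> and \<open>x \<in> {u, \<phi> u, \<phi> (\<omega> u), \<phi> (\<omega>\<^sup>2 u)}\<close>, where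
  \<open>\<phi> x = 3 (x + 6) / (x - 3)\<close>. If \<open>\<omega>\<close> lies in the field (that is, \<open>q \<equiv> 1 mod 3\<close>),
  each of these is realised by an explicit change of variables, so \<open>I_H u\<close> is this orbit;
  it has 12 points unless \<open>u\<close> is a fixed point of the group, which happens exactly when
  \<open>A\<^sub>u B\<^sub>u = 0\<close> and leaves 4 or 6 points. Without \<open>\<omega>\<close> (\<open>q \<equiv> 2 mod 3\<close>) the only
  roots besides \<open>u\<close> give twists of \<open>E\<^sub>u\<close>, whose isomorphism with it would again produce
  a cube root of unity; in characteristic 3 the change-of-variables equations force
  \<open>v = u\<close> directly.\<close>

section \<open>Cube roots of unity and the residue of \<open>q\<close> modulo 3\<close>

lemma CHAR_eq_prime_iff:
  assumes "prime p"
  shows "CHAR('a::field) = p \<longleftrightarrow> (of_nat p :: 'a) = 0"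
proof
  assume "of_nat p = (0::'a)"
  then have "CHAR('a) dvd p" by (simp add: of_nat_eq_0_iff_char_dvd)
  with assms show "CHAR('a) = p" by (auto simp: prime_nat_iff)
qed auto

lemma CHAR_eq_2_iff: "CHAR('a::field) = 2 \<longleftrightarrow> (2::'a) = 0"
  using CHAR_eq_prime_iff[of 2] by simp

lemma CHAR_eq_3_iff: "CHAR('a::field) = 3 \<longleftrightarrow> (3::'a) = 0"
  using CHAR_eq_prime_iff[of 3] by simp

lemma omega_cube_eq_1: "\<omega>^2 + \<omega> + 1 = (0::'a::field) \<Longrightarrow> \<omega>^3 = 1"
proof -
  assume "\<omega>^2 + \<omega> + 1 = 0"
  moreover have "\<omega>^3 - 1 = (\<omega> - 1) * (\<omega>^2 + \<omega> + 1)" by algebra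
  ultimately show ?thesis by simp
qed

lemma omega_distinct:
  fixes \<omega> :: "'a::field"
  assumes "(3::'a) \<noteq> 0" and "\<omega>^2 + \<omega> + 1 = 0"
  shows "\<omega> \<noteq> 0" "\<omega> \<noteq> 1" "\<omega>^2 \<noteq> 1" "\<omega>^2 \<noteq> \<omega>"
proof -
  show "\<omega> \<noteq> 0" "\<omega> \<noteq> 1" using assms by auto
  then show "\<omega>^2 \<noteq> \<omega>" by (simp add: power2_eq_square)
  show "\<omega>^2 \<noteq> 1"
  proof
    assume "\<omega>^2 = 1"
    with assms(2) have "\<omega> + 2 = 0" by (simp add: algebra_simps)
    then have "\<omega> = -2" by (simp add: eq_neg_iff_add_eq_0)
    with assms show False by simp
  qed
qed

lemma cube_roots_of_unity:
  fixes \<omega> :: "'a::field"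
  assumes "\<omega>^2 + \<omega> + 1 = 0" and "z \<in> {1, \<omega>, \<omega>^2}"
  shows "z^3 = 1"
  using assms omega_cube_eq_1[OF assms(1)] by (auto, algebra)

lemma cube_eq_cube_iff_omega:
  fixes a b \<omega> :: "'a::field"
  assumes "\<omega>^2 + \<omega> + 1 = 0"
  shows "a^3 = b^3 \<longleftrightarrow> (\<exists>z \<in> {1, \<omega>, \<omega>^2}. a = z * b)"
proof
  assume "a^3 = b^3"
  moreover have "a^3 - b^3 = (a - b) * (a - \<omega> * b) * (a - \<omega>^2 * b)" using assms by algebra
  ultimately have "(a - b) * (a - \<omega> * b) * (a - \<omega>^2 * b) = 0" by simp
  then show "\<exists>z \<in> {1, \<omega>, \<omega>^2}. a = z * b" by auto
next
  assume "\<exists>z \<in> {1, \<omega>, \<omega>^2}. a = z * b"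
  then obtain z where "z \<in> {1, \<omega>, \<omega>^2}" "a = z * b" by blast
  then show "a^3 = b^3" using cube_roots_of_unity[OF assms] by (simp add: power_mult_distrib)
qed

definition eisenstein_norm :: "'a::comm_ring_1 \<Rightarrow> 'a \<Rightarrow> 'a" where
  "eisenstein_norm a b = a^2 - a * b + b^2"

lemma eisenstein_norm_eq_0_iff:
  fixes a b :: "'a::field"
  assumes "\<And>x::'a. x^2 + x + 1 \<noteq> 0"
  shows "eisenstein_norm a b = 0 \<longleftrightarrow> a = 0 \<and> b = 0"
proof (cases "b = 0")
  case False
  have "(-a/b)^2 + (-a/b) + 1 = eisenstein_norm a b / b^2"
    using False by (simp add: eisenstein_norm_def field_simps power2_eq_square)
  then show ?thesis using assms[of "-a/b"] False by auto
qed (simp add: eisenstein_norm_def)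

lemma cube_inj_if_no_omega:
  fixes a b :: "'a::field"
  assumes "\<And>x::'a. x^2 + x + 1 \<noteq> 0" and "a^3 = b^3"
  shows "a = b"
proof -
  have "(a - b) * eisenstein_norm a (-b) = 0"
    using assms(2) unfolding eisenstein_norm_def by algebra
  then show ?thesis using eisenstein_norm_eq_0_iff[OF assms(1)] by auto
qed

lemma minus_3_not_square_if_no_omega:
  fixes a b :: "'a::field"
  assumes "(2::'a) \<noteq> 0" and "\<And>x::'a. x^2 + x + 1 \<noteq> 0" and "a^2 = -3 * b^2"
  shows "b = 0"
proof (rule ccontr)
  assume "b \<noteq> 0"
  define y where "y = (a/b - 1) / 2"
  have "a = (2*y + 1) * b" using \<open>b \<noteq> 0\<close> assms(1) unfolding y_def by (simp add: field_simps)
  then have "2 * (2 * ((y^2 + y + 1) * b^2)) = 0" using assms(3) by algebra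
  with \<open>b \<noteq> 0\<close> assms(1) have "y^2 + y + 1 = 0" by (metis mult_eq_0_iff power_not_zero)
  with assms(2) show False by blast
qed

lemma three_dvd_card_if_fixpoint_free_order_3:
  assumes "finite S" and S: "\<And>x. x \<in> S \<Longrightarrow> f x \<in> S"
    and order_3: "\<And>x. x \<in> S \<Longrightarrow> f (f (f x)) = x" and free: "\<And>x. x \<in> S \<Longrightarrow> f x \<noteq> x"
  shows "3 dvd card S"
proof -
  define orb where "orb x = {x, f x, f (f x)}" for x
  have orb_eq: "orb y = orb x" if "x \<in> S" "y \<in> orb x" for x y
    using that S order_3 unfolding orb_def by auto
  have card_orb: "card (orb x) = 3" if "x \<in> S" for x
  proof -
    have "f x \<noteq> x" "f (f x) \<noteq> f x" using that S free by auto
    moreover have "f (f x) \<noteq> x" using that S order_3 free by metis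
    ultimately show ?thesis unfolding orb_def by simp
  qed
  have "S = \<Union> (orb ` S)" using S unfolding orb_def by auto
  moreover have "3 dvd card (\<Union> (orb ` S))"
  proof (rule dvd_partition)
    show "finite (\<Union> (orb ` S))" using assms(1) unfolding orb_def by auto
    show "\<forall>c\<in>orb ` S. 3 dvd card c" using card_orb by auto
    show "\<forall>c1\<in>orb ` S. \<forall>c2\<in>orb ` S. c1 \<noteq> c2 \<longrightarrow> c1 \<inter> c2 = {}"
      using orb_eq by blast
  qed
  ultimately show ?thesis by simp
qed

lemma nat_mod_3_eq_1_if_dvd_minus_1: "3 dvd n - 1 \<Longrightarrow> 1 \<le> (n::nat) \<Longrightarrow> n mod 3 = 1"
  by presburger

lemma nat_mod_3_eq_2_if_dvd_minus_2: "3 dvd n - 2 \<Longrightarrow> 2 \<le> (n::nat) \<Longrightarrow> n mod 3 = 2"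
  by presburger

lemma card_UNIV_mod_3_if_char_3:
  assumes "(3::'a::{finite, field}) = 0"
  shows "card (UNIV :: 'a set) mod 3 = 0"
proof -
  have "x + 1 + 1 + 1 = x" for x :: 'a
  proof -
    have "x + 1 + 1 + 1 = x + 3" by simp
    with assms show ?thesis by simp
  qed
  then have "3 dvd card (UNIV :: 'a set)"
    by (intro three_dvd_card_if_fixpoint_free_order_3[where f = "\<lambda>x. x + 1"]) auto
  then show ?thesis by simp
qed

lemma card_UNIV_mod_3_if_omega:
  fixes \<omega> :: "'a::{finite, field}"
  assumes "(3::'a) \<noteq> 0" and "\<omega>^2 + \<omega> + 1 = 0"
  shows "card (UNIV :: 'a set) mod 3 = 1"
proof -
  note \<omega> = omega_distinct[OF assms] omega_cube_eq_1[OF assms(2)]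
  have "\<omega> * (\<omega> * (\<omega> * x)) = \<omega>^3 * x" for x by algebra
  then have "\<omega> * (\<omega> * (\<omega> * x)) = x" for x using \<omega> by simp
  then have "3 dvd card (UNIV - {0::'a})"
    using \<omega> by (intro three_dvd_card_if_fixpoint_free_order_3[where f = "\<lambda>x. \<omega> * x"]) auto
  moreover have "card (UNIV - {0::'a}) = card (UNIV :: 'a set) - 1" by (simp add: card_Diff_singleton)
  moreover have "card (UNIV :: 'a set) \<ge> 1" by (simp add: Suc_leI finite_UNIV_card_ge_0)
  ultimately show ?thesis by (metis nat_mod_3_eq_1_if_dvd_minus_1)
qed

text \<open>\<open>x \<mapsto> 1 / (1 - x)\<close> permutes the field minus \<open>{0, 1}\<close> with order 3, and a fixed point
  would be a root of \<open>x^2 - x + 1\<close>.\<close>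

lemma card_UNIV_mod_3_if_no_omega:
  assumes "\<And>\<omega>::'a::{finite, field}. \<omega>^2 + \<omega> + 1 \<noteq> 0"
  shows "card (UNIV :: 'a set) mod 3 = 2"
proof -
  let ?f = "\<lambda>x::'a. 1 / (1 - x)"
  have "3 dvd card (UNIV - {0::'a, 1})"
  proof (rule three_dvd_card_if_fixpoint_free_order_3[where f = ?f])
    fix x :: 'a assume "x \<in> UNIV - {0, 1}"
    then have x0: "x \<noteq> 0" and x1: "1 - x \<noteq> 0" by auto
    show "?f x \<in> UNIV - {0, 1}" using x0 x1 by (auto simp: field_simps)
    have "1 - ?f x = - x / (1 - x)" using x1 by (simp add: field_simps)
    then have "?f (?f x) = (x - 1) / x" using x0 x1 by (simp add: field_simps)
    moreover have "1 - (x - 1) / x = 1 / x" using x0 by (simp add: field_simps)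
    ultimately show "?f (?f (?f x)) = x" using x0 by simp
    show "?f x \<noteq> x"
    proof
      assume "?f x = x"
      then have "(-x)^2 + (-x) + 1 = 0" using x1 by (simp add: field_simps power2_eq_square)
      with assms show False by blast
    qed
  qed simp
  moreover have "card (UNIV - {0::'a, 1}) = card (UNIV :: 'a set) - 2" by (simp add: card_Diff_subset)
  moreover have "card {0::'a, 1} \<le> card (UNIV :: 'a set)" by (rule card_mono) auto
  ultimately show ?thesis by (simp add: nat_mod_3_eq_2_if_dvd_minus_2)
qed

section \<open>Invariants of Weierstrass equations\<close>

text \<open>The quantities \<open>b\<^sub>2, b\<^sub>4, b\<^sub>6, b\<^sub>8, c\<^sub>4, c\<^sub>6, \<Delta>\<close> of Silverman, III.1.\<close>

definition weier_b2 :: "'a::field weier \<Rightarrow> 'a" where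
  "weier_b2 = (\<lambda>(a1, a2, a3, a4, a6). a1^2 + 4*a2)"

definition weier_b4 :: "'a::field weier \<Rightarrow> 'a" where
  "weier_b4 = (\<lambda>(a1, a2, a3, a4, a6). a1*a3 + 2*a4)"

definition weier_b6 :: "'a::field weier \<Rightarrow> 'a" where
  "weier_b6 = (\<lambda>(a1, a2, a3, a4, a6). a3^2 + 4*a6)"

definition weier_b8 :: "'a::field weier \<Rightarrow> 'a" where
  "weier_b8 = (\<lambda>(a1, a2, a3, a4, a6). a1^2*a6 + 4*a2*a6 - a1*a3*a4 + a2*a3^2 - a4^2)"

definition weier_c4 :: "'a::field weier \<Rightarrow> 'a" where
  "weier_c4 E = weier_b2 E ^ 2 - 24 * weier_b4 E"

definition weier_c6 :: "'a::field weier \<Rightarrow> 'a" where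
  "weier_c6 E = - (weier_b2 E ^ 3) + 36 * weier_b2 E * weier_b4 E - 216 * weier_b6 E"

definition weier_disc :: "'a::field weier \<Rightarrow> 'a" where
  "weier_disc E = - (weier_b2 E ^ 2 * weier_b8 E) - 8 * weier_b4 E ^ 3 - 27 * weier_b6 E ^ 2
     + 9 * weier_b2 E * weier_b4 E * weier_b6 E"

lemma weier_iso_iff:
  "weier_iso (a1, a2, a3, a4, a6) (b1, b2, b3, b4, b6) \<longleftrightarrow>
     (\<exists>r s t w. w \<noteq> 0 \<and>
        w * b1 = a1 + 2 * s \<and>
        w ^ 2 * b2 = a2 - s * a1 + 3 * r - s ^ 2 \<and>
        w ^ 3 * b3 = a3 + r * a1 + 2 * t \<and>
        w ^ 4 * b4 = a4 - s * a3 + 2 * r * a2 - (t + r * s) * a1 + 3 * r ^ 2 - 2 * s * t \<and>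
        w ^ 6 * b6 = a6 + r * a4 + r ^ 2 * a2 + r ^ 3 - t * a3 - t ^ 2 - r * t * a1)"
  by (simp add: weier_iso_def)

lemma weier_iso_refl: "weier_iso E (E::'a::field weier)"
proof -
  obtain a1 a2 a3 a4 a6 where E: "E = (a1, a2, a3, a4, a6)" by (cases E) auto
  show ?thesis unfolding E weier_iso_iff
    by (rule exI[of _ 0], rule exI[of _ 0], rule exI[of _ 0], rule exI[of _ 1]) simp
qed

lemma weier_iso_trans:
  assumes "weier_iso E1 E2" and "weier_iso E2 E3"
  shows "weier_iso E1 (E3::'a::field weier)"
proof -
  obtain a1 a2 a3 a4 a6 where E1: "E1 = (a1, a2, a3, a4, a6)" by (cases E1) auto
  obtain b1 b2 b3 b4 b6 where E2: "E2 = (b1, b2, b3, b4, b6)" by (cases E2) auto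
  obtain c1 c2 c3 c4 c6 where E3: "E3 = (c1, c2, c3, c4, c6)" by (cases E3) auto
  from assms(1) obtain r1 s1 t1 w1 where "w1 \<noteq> 0" and
    e: "w1 * b1 = a1 + 2 * s1"
       "w1 ^ 2 * b2 = a2 - s1 * a1 + 3 * r1 - s1 ^ 2"
       "w1 ^ 3 * b3 = a3 + r1 * a1 + 2 * t1"
       "w1 ^ 4 * b4 = a4 - s1 * a3 + 2 * r1 * a2 - (t1 + r1 * s1) * a1 + 3 * r1 ^ 2 - 2 * s1 * t1"
       "w1 ^ 6 * b6 = a6 + r1 * a4 + r1 ^ 2 * a2 + r1 ^ 3 - t1 * a3 - t1 ^ 2 - r1 * t1 * a1"
    unfolding E1 E2 weier_iso_iff by blast
  from assms(2) obtain r2 s2 t2 w2 where "w2 \<noteq> 0" and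
    f: "w2 * c1 = b1 + 2 * s2"
       "w2 ^ 2 * c2 = b2 - s2 * b1 + 3 * r2 - s2 ^ 2"
       "w2 ^ 3 * c3 = b3 + r2 * b1 + 2 * t2"
       "w2 ^ 4 * c4 = b4 - s2 * b3 + 2 * r2 * b2 - (t2 + r2 * s2) * b1 + 3 * r2 ^ 2 - 2 * s2 * t2"
       "w2 ^ 6 * c6 = b6 + r2 * b4 + r2 ^ 2 * b2 + r2 ^ 3 - t2 * b3 - t2 ^ 2 - r2 * t2 * b1"
    unfolding E2 E3 weier_iso_iff by blast
  define r s t w where "r = r1 + w1^2 * r2" and "s = s1 + w1 * s2"
    and "t = t1 + w1^3 * t2 + s1 * w1^2 * r2" and "w = w1 * w2"
  have "w \<noteq> 0" using \<open>w1 \<noteq> 0\<close> \<open>w2 \<noteq> 0\<close> unfolding w_def by simp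
  moreover have "w * c1 = a1 + 2 * s" using e f unfolding r_def s_def t_def w_def by algebra
  moreover have "w ^ 2 * c2 = a2 - s * a1 + 3 * r - s ^ 2"
    using e f unfolding r_def s_def t_def w_def by algebra
  moreover have "w ^ 3 * c3 = a3 + r * a1 + 2 * t"
    using e f unfolding r_def s_def t_def w_def by algebra
  moreover have "w ^ 4 * c4 = a4 - s * a3 + 2 * r * a2 - (t + r * s) * a1 + 3 * r ^ 2 - 2 * s * t"
    using e f unfolding r_def s_def t_def w_def by algebra
  moreover have "w ^ 6 * c6 = a6 + r * a4 + r ^ 2 * a2 + r ^ 3 - t * a3 - t ^ 2 - r * t * a1"
    using e f unfolding r_def s_def t_def w_def by algebra
  ultimately show ?thesis unfolding E1 E3 weier_iso_iff by blast
qed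

lemma weier_b8_relation: "4 * weier_b8 E = weier_b2 E * weier_b6 E - weier_b4 E ^ 2"
  by (cases E)
    (simp add: weier_b2_def weier_b4_def weier_b6_def weier_b8_def power2_eq_square algebra_simps)

lemma weier_iso_invariants:
  fixes E E' :: "'a::field weier"
  assumes "weier_iso E E'"
  obtains w where "w \<noteq> 0" "w^4 * weier_c4 E' = weier_c4 E" "w^6 * weier_c6 E' = weier_c6 E"
    "w^12 * weier_disc E' = weier_disc E"
proof -
  obtain a1 a2 a3 a4 a6 where E: "E = (a1, a2, a3, a4, a6)" by (cases E) auto
  obtain b1 b2 b3 b4 b6 where E': "E' = (b1, b2, b3, b4, b6)" by (cases E') auto
  from assms obtain r s t w where "w \<noteq> 0" and
    e: "w * b1 = a1 + 2 * s"
       "w ^ 2 * b2 = a2 - s * a1 + 3 * r - s ^ 2"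
       "w ^ 3 * b3 = a3 + r * a1 + 2 * t"
       "w ^ 4 * b4 = a4 - s * a3 + 2 * r * a2 - (t + r * s) * a1 + 3 * r ^ 2 - 2 * s * t"
       "w ^ 6 * b6 = a6 + r * a4 + r ^ 2 * a2 + r ^ 3 - t * a3 - t ^ 2 - r * t * a1"
    unfolding E E' weier_iso_iff by blast
  have b2: "w^2 * weier_b2 E' = weier_b2 E + 12*r"
    using e unfolding E E' weier_b2_def by simp algebra
  have b4: "w^4 * weier_b4 E' = weier_b4 E + r * weier_b2 E + 6*r^2"
    using e unfolding E E' weier_b2_def weier_b4_def by simp algebra
  have b6: "w^6 * weier_b6 E' = weier_b6 E + 2*r * weier_b4 E + r^2 * weier_b2 E + 4*r^3"
    using e unfolding E E' weier_b2_def weier_b4_def weier_b6_def by simp algebra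
  have b8: "w^8 * weier_b8 E' = weier_b8 E + 3*r * weier_b6 E + 3*r^2 * weier_b4 E
      + r^3 * weier_b2 E + 3*r^4"
    using e unfolding E E' weier_b2_def weier_b4_def weier_b6_def weier_b8_def by simp algebra
  show thesis
  proof
    show "w \<noteq> 0" by fact
    show "w^4 * weier_c4 E' = weier_c4 E"
      unfolding weier_c4_def using b2 b4 by algebra
    show "w^6 * weier_c6 E' = weier_c6 E"
      unfolding weier_c6_def using b2 b4 b6 by algebra
    show "w^12 * weier_disc E' = weier_disc E"
      unfolding weier_disc_def using b2 b4 b6 b8 weier_b8_relation[of E] by algebra
  qed
qed

section \<open>Hessian curves and their \<open>j\<close>-invariant\<close>

lemma hessian_weier_char_3:
  "(3::'a::field) = 0 \<Longrightarrow> hessian_weier (u::'a) = (u, 0, u ^ 2, 0, 0)"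
  by (simp add: hessian_weier_def CHAR_eq_3_iff)

lemma hessian_weier_char_neq_3:
  "(3::'a::field) \<noteq> 0 \<Longrightarrow> hessian_weier (u::'a) =
     (3 * u, - 9 * u ^ 2, - 9 * (u ^ 3 - 27), 27 * u * (u ^ 3 - 27), - 27 * (u ^ 3 - 27) ^ 2)"
  by (simp add: hessian_weier_def CHAR_eq_3_iff)

lemma hessian_iso_refl: "hessian_iso u u"
  unfolding hessian_iso_def by (rule weier_iso_refl)

lemma hessian_iso_trans: "hessian_iso u v \<Longrightarrow> hessian_iso v x \<Longrightarrow> hessian_iso u x"
  unfolding hessian_iso_def by (rule weier_iso_trans)

definition hessian_c4 :: "'a::field \<Rightarrow> 'a" where
  "hessian_c4 u = u * (u^3 + 216)"

definition hessian_c6 :: "'a::field \<Rightarrow> 'a" where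
  "hessian_c6 u = u^6 - 540 * u^3 - 5832"

definition hessian_disc :: "'a::field \<Rightarrow> 'a" where
  "hessian_disc u = u^3 - 27"

lemma weier_invariants_hessian:
  assumes "(3::'a::field) \<noteq> 0"
  shows "weier_c4 (hessian_weier u) = 81 * hessian_c4 (u::'a)"
    and "weier_c6 (hessian_weier u) = - 729 * hessian_c6 u"
    and "weier_disc (hessian_weier u) = 531441 * hessian_disc u ^ 3"
  unfolding hessian_weier_char_neq_3[OF assms] weier_c4_def weier_c6_def weier_disc_def
    weier_b2_def weier_b4_def weier_b6_def weier_b8_def hessian_c4_def hessian_c6_def
    hessian_disc_def
  by (simp; algebra)+

lemma A_coef_eq_0_iff: "(3::'a::field) \<noteq> 0 \<Longrightarrow> A_coef (u::'a) = 0 \<longleftrightarrow> hessian_c4 u = 0"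
  by (simp add: A_coef_def hessian_c4_def)

lemma B_coef_eq_0_iff: "(3::'a::field) \<noteq> 0 \<Longrightarrow> B_coef (u::'a) = 0 \<longleftrightarrow> hessian_c6 u = 0"
  using power_not_zero[of "3::'a" 3] by (simp add: B_coef_def hessian_c6_def)

lemma hessian_iso_invariants:
  fixes u v :: "'a::field"
  assumes n3: "(3::'a) \<noteq> 0" and "hessian_iso u v"
  obtains w where "w \<noteq> 0" "w^4 * hessian_c4 v = hessian_c4 u" "w^6 * hessian_c6 v = hessian_c6 u"
    "w^12 * hessian_disc v ^ 3 = hessian_disc u ^ 3"
proof -
  obtain w where "w \<noteq> 0"
    and c4: "w^4 * weier_c4 (hessian_weier v) = weier_c4 (hessian_weier u)"
    and c6: "w^6 * weier_c6 (hessian_weier v) = weier_c6 (hessian_weier u)"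
    and disc: "w^12 * weier_disc (hessian_weier v) = weier_disc (hessian_weier u)"
    using assms(2) weier_iso_invariants unfolding hessian_iso_def by blast
  note inv = weier_invariants_hessian[OF n3]
  have "81 * (w^4 * hessian_c4 v - hessian_c4 u) = 0" using c4 unfolding inv by algebra
  moreover have "729 * (w^6 * hessian_c6 v - hessian_c6 u) = 0" using c6 unfolding inv by algebra
  moreover have "531441 * (w^12 * hessian_disc v ^ 3 - hessian_disc u ^ 3) = 0"
    using disc unfolding inv by algebra
  moreover have "(81::'a) \<noteq> 0" "(729::'a) \<noteq> 0" "(531441::'a) \<noteq> 0"
    using power_not_zero[OF n3, of 4] power_not_zero[OF n3, of 6] power_not_zero[OF n3, of 12]
    by simp_all
  ultimately show thesis using \<open>w \<noteq> 0\<close> that by simp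
qed

text \<open>\<open>j(E_u) = hessian_c4 u ^ 3 / hessian_disc u ^ 3\<close>, so this is the numerator of
  \<open>j(E_u) - j(E_v)\<close>.\<close>

definition hessian_j_diff :: "'a::field \<Rightarrow> 'a \<Rightarrow> 'a" where
  "hessian_j_diff u v = hessian_c4 u ^ 3 * hessian_disc v ^ 3 - hessian_c4 v ^ 3 * hessian_disc u ^ 3"

lemma hessian_j_diff_eq_0_if_iso:
  assumes "(3::'a::field) \<noteq> 0" and "hessian_iso u (v::'a)"
  shows "hessian_j_diff u v = 0"
proof -
  obtain w where c4: "w^4 * hessian_c4 v = hessian_c4 u"
    and disc: "w^12 * hessian_disc v ^ 3 = hessian_disc u ^ 3"
    using hessian_iso_invariants[OF assms] by blast
  have "hessian_c4 u ^ 3 = w^12 * hessian_c4 v ^ 3" unfolding c4[symmetric] by algebra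
  then show ?thesis unfolding hessian_j_diff_def disc[symmetric] by algebra
qed

lemma hessian_iso_mult_cube_root:
  fixes x z :: "'a::field"
  assumes n3: "(3::'a) \<noteq> 0" and z: "z^3 = 1"
  shows "hessian_iso x (z * x)"
proof -
  have "z^2 \<noteq> 0" using z by auto
  moreover have "z^2 * (3 * (z * x)) = 3 * x"
    and "(z^2)^2 * (- 9 * (z * x)^2) = - 9 * x^2"
    and "(z^2)^3 * (- 9 * ((z * x)^3 - 27)) = - 9 * (x^3 - 27)"
    and "(z^2)^4 * (27 * (z * x) * ((z * x)^3 - 27)) = 27 * x * (x^3 - 27)"
    and "(z^2)^6 * (- 27 * ((z * x)^3 - 27)^2) = - 27 * (x^3 - 27)^2"
    using z by algebra+
  ultimately show ?thesis
    unfolding hessian_iso_def hessian_weier_char_neq_3[OF n3] weier_iso_iff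
    by (intro exI[of _ 0] exI[of _ "z^2"]) simp
qed

text \<open>Its value at \<open>x = 3\<close> is junk, but \<open>x^3 \<noteq> 27\<close> whenever it is used.\<close>

definition hessian_flip :: "'a::field \<Rightarrow> 'a" where
  "hessian_flip x = 3 * (x + 6) / (x - 3)"

lemma hessian_flip_eq: "x \<noteq> 3 \<Longrightarrow> hessian_flip x * (x - 3) = 3 * (x + 6)"
  by (simp add: hessian_flip_def)

text \<open>The change of variables needs a square root of \<open>-3\<close>, namely \<open>1 + 2\<omega>\<close>.\<close>

lemma hessian_iso_flip:
  fixes x \<omega> :: "'a::field"
  assumes n3: "(3::'a) \<noteq> 0" and om: "\<omega>^2 + \<omega> + 1 = 0" and x3: "x \<noteq> 3"
  shows "hessian_iso x (hessian_flip x)"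
proof -
  define v where "v = hessian_flip x"
  have v: "v * (x - 3) = 3 * (x + 6)" unfolding v_def using hessian_flip_eq[OF x3] .
  obtain k :: 'a where k: "3 * k = 1" using n3 by (metis right_inverse)
  define w where "w = (x - 3) * (1 + 2*\<omega>) * k^2"
  define s where "s = (\<omega> - 1) * x + 3 + 6*\<omega>"
  define r where "r = 3 * (x^2 + 3*x + 9)"
  define t where "t = 27 * \<omega> * (x^2 + 3*x + 9)"
  have "(1 + 2*\<omega>)^2 = -3" using om by algebra
  then have "1 + 2*\<omega> \<noteq> 0" using n3 by auto
  moreover have "k \<noteq> 0" using k by auto
  ultimately have "w \<noteq> 0" using x3 unfolding w_def by simp
  moreover have "w * (3 * v) = 3 * x + 2 * s"
    unfolding w_def s_def using v om k by algebra
  moreover have "w ^ 2 * (- 9 * v ^ 2) = - 9 * x ^ 2 - s * (3 * x) + 3 * r - s ^ 2"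
    unfolding w_def s_def r_def using v om k by algebra
  moreover have "w ^ 3 * (- 9 * (v ^ 3 - 27)) = - 9 * (x ^ 3 - 27) + r * (3 * x) + 2 * t"
    unfolding w_def r_def t_def using v om k by algebra
  moreover have "w ^ 4 * (27 * v * (v ^ 3 - 27)) = 27 * x * (x ^ 3 - 27) - s * (- 9 * (x ^ 3 - 27))
      + 2 * r * (- 9 * x ^ 2) - (t + r * s) * (3 * x) + 3 * r ^ 2 - 2 * s * t"
    unfolding w_def s_def r_def t_def using v om k by algebra
  moreover have "w ^ 6 * (- 27 * (v ^ 3 - 27) ^ 2) = - 27 * (x ^ 3 - 27) ^ 2
      + r * (27 * x * (x ^ 3 - 27)) + r ^ 2 * (- 9 * x ^ 2) + r ^ 3 - t * (- 9 * (x ^ 3 - 27))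
      - t ^ 2 - r * t * (3 * x)"
    unfolding w_def s_def r_def t_def using v om k by algebra
  ultimately show ?thesis
    unfolding v_def hessian_iso_def hessian_weier_char_neq_3[OF n3] weier_iso_iff by blast
qed

lemma mem_image_mult_Times_iff:
  "v \<in> (\<lambda>(z, x). z * x) ` (A \<times> B) \<longleftrightarrow> (\<exists>z \<in> A. \<exists>x \<in> B. v = z * x)"
  by auto

lemma hessian_flip_cube_neq_27:
  fixes y :: "'a::field"
  assumes "(3::'a) \<noteq> 0" and "y^3 \<noteq> 27"
  shows "hessian_flip y ^ 3 \<noteq> 27"
proof
  assume "hessian_flip y ^ 3 = 27"
  then have "(hessian_flip y * (y - 3))^3 = 27 * (y - 3)^3" by (simp add: power_mult_distrib)
  moreover have "y \<noteq> 3" using assms(2) by auto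
  ultimately have "(3 * (y + 6))^3 = 27 * (y - 3)^3" by (simp add: hessian_flip_eq)
  then have "729 * (y^3 - 27) = 0" by algebra
  moreover have "(729::'a) \<noteq> 0" using power_not_zero[OF assms(1), of 6] by simp
  ultimately have "y^3 - 27 = 0" by (metis mult_eq_0_iff)
  with assms(2) show False by simp
qed

text \<open>The orbit of \<open>u\<close> under the group generated by \<open>x \<mapsto> \<omega> x\<close> and \<open>hessian_flip\<close>.\<close>

definition hessian_orbit :: "'a::field \<Rightarrow> 'a \<Rightarrow> 'a set" where
  "hessian_orbit \<omega> u = (\<lambda>(z, x). z * x) `
     ({1, \<omega>, \<omega>^2} \<times> insert u ((\<lambda>y. hessian_flip (y * u)) ` {1, \<omega>, \<omega>^2}))"

lemma hessian_orbit_subset_I_H: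
  fixes u \<omega> :: "'a::field"
  assumes n3: "(3::'a) \<noteq> 0" and om: "\<omega>^2 + \<omega> + 1 = 0" and u: "u^3 \<noteq> 27"
  shows "hessian_orbit \<omega> u \<subseteq> I_H u"
proof
  fix v assume "v \<in> hessian_orbit \<omega> u"
  then obtain z x where z: "z \<in> {1, \<omega>, \<omega>^2}"
    and x: "x \<in> insert u ((\<lambda>y. hessian_flip (y * u)) ` {1, \<omega>, \<omega>^2})" and v: "v = z * x"
    unfolding hessian_orbit_def mem_image_mult_Times_iff by (elim bexE)
  have "hessian_iso u x \<and> x^3 \<noteq> 27"
  proof (cases "x = u")
    case True
    then show ?thesis using u hessian_iso_refl by simp
  next
    case False
    with x obtain y where y: "y \<in> {1, \<omega>, \<omega>^2}" and x: "x = hessian_flip (y * u)"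
      by (auto simp only: insert_iff image_iff)
    have y3: "y^3 = 1" by (rule cube_roots_of_unity[OF om y])
    have yu: "(y * u)^3 \<noteq> 27" using u y3 by (simp add: power_mult_distrib)
    then have "y * u \<noteq> 3" by (rule contrapos_nn) simp
    have "hessian_iso u x"
      using hessian_iso_mult_cube_root[OF n3 y3] hessian_iso_flip[OF n3 om \<open>y * u \<noteq> 3\<close>]
      unfolding x by (rule hessian_iso_trans)
    moreover have "x^3 \<noteq> 27" unfolding x by (rule hessian_flip_cube_neq_27[OF n3 yu])
    ultimately show ?thesis ..
  qed
  moreover have "hessian_iso x v"
    unfolding v by (rule hessian_iso_mult_cube_root[OF n3 cube_roots_of_unity[OF om z]])
  moreover have "v^3 = x^3"
    unfolding v using cube_roots_of_unity[OF om z] by (simp add: power_mult_distrib)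
  ultimately show "v \<in> I_H u" unfolding I_H_def using hessian_iso_trans by auto
qed

lemma hessian_j_diff_factor_omega:
  fixes u v \<omega> :: "'a::field"
  assumes "\<omega>^2 + \<omega> + 1 = 0"
  shows "hessian_j_diff u v = - ((v - 1 * u) * (v - \<omega> * u) * (v - \<omega>^2 * u)
     * (v * (1 * u - 3) - 3 * 1 * (1 * u + 6)) * (v * (1 * u - 3) - 3 * \<omega> * (1 * u + 6))
     * (v * (1 * u - 3) - 3 * \<omega>^2 * (1 * u + 6))
     * (v * (\<omega> * u - 3) - 3 * 1 * (\<omega> * u + 6)) * (v * (\<omega> * u - 3) - 3 * \<omega> * (\<omega> * u + 6))
     * (v * (\<omega> * u - 3) - 3 * \<omega>^2 * (\<omega> * u + 6))
     * (v * (\<omega>^2 * u - 3) - 3 * 1 * (\<omega>^2 * u + 6))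
     * (v * (\<omega>^2 * u - 3) - 3 * \<omega> * (\<omega>^2 * u + 6))
     * (v * (\<omega>^2 * u - 3) - 3 * \<omega>^2 * (\<omega>^2 * u + 6)))"
  unfolding hessian_j_diff_def hessian_c4_def hessian_disc_def using assms by algebra

lemma hessian_j_diff_eq_0_imp_orbit:
  fixes u v \<omega> :: "'a::field"
  assumes om: "\<omega>^2 + \<omega> + 1 = 0" and u: "u^3 \<noteq> 27" and "hessian_j_diff u v = 0"
  shows "v \<in> hessian_orbit \<omega> u"
proof -
  have mult: "v \<in> hessian_orbit \<omega> u" if "v - z * u = 0" "z \<in> {1, \<omega>, \<omega>^2}" for z
    unfolding hessian_orbit_def mem_image_mult_Times_iff
    by (rule bexI[of _ z], rule bexI[of _ u]) (use that in auto)
  have flip: "v \<in> hessian_orbit \<omega> u"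
    if "v * (y * u - 3) - 3 * z * (y * u + 6) = 0" "z \<in> {1, \<omega>, \<omega>^2}" "y \<in> {1, \<omega>, \<omega>^2}" for z y
  proof -
    have "(y * u)^3 \<noteq> 27" using u cube_roots_of_unity[OF om that(3)] by (simp add: power_mult_distrib)
    then have "y * u \<noteq> 3" by (rule contrapos_nn) simp
    then have v: "v = z * hessian_flip (y * u)" using that(1) by (simp add: hessian_flip_def field_simps)
    show ?thesis unfolding hessian_orbit_def mem_image_mult_Times_iff
      by (rule bexI[of _ z], rule bexI[of _ "hessian_flip (y * u)"]) (use v that(2,3) in auto)
  qed
  have "(v - 1 * u) * (v - \<omega> * u) * (v - \<omega>^2 * u)
     * (v * (1 * u - 3) - 3 * 1 * (1 * u + 6)) * (v * (1 * u - 3) - 3 * \<omega> * (1 * u + 6))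
     * (v * (1 * u - 3) - 3 * \<omega>^2 * (1 * u + 6))
     * (v * (\<omega> * u - 3) - 3 * 1 * (\<omega> * u + 6)) * (v * (\<omega> * u - 3) - 3 * \<omega> * (\<omega> * u + 6))
     * (v * (\<omega> * u - 3) - 3 * \<omega>^2 * (\<omega> * u + 6))
     * (v * (\<omega>^2 * u - 3) - 3 * 1 * (\<omega>^2 * u + 6))
     * (v * (\<omega>^2 * u - 3) - 3 * \<omega> * (\<omega>^2 * u + 6))
     * (v * (\<omega>^2 * u - 3) - 3 * \<omega>^2 * (\<omega>^2 * u + 6)) = 0"
    using assms(3) unfolding hessian_j_diff_factor_omega[OF om] neg_equal_0_iff_equal .
  then show ?thesis unfolding mult_eq_0_iff disj_assoc
    by (elim disjE) (erule mult flip; simp)+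
qed

section \<open>Rigidity without cube roots of unity\<close>

text \<open>Lets \<open>algebra\<close> prove identities that hold only in characteristic \<open>c\<close>: the witness
  identity \<open>a - b = h + c * k\<close> is characteristic-free.\<close>

lemma eq_if_diff_eq_char_multiple:
  "(c::'a::comm_ring_1) = 0 \<Longrightarrow> a - b = h + c * k \<Longrightarrow> h = 0 \<Longrightarrow> a = b"
  by simp

lemma hessian_j_diff_factor:
  "hessian_j_diff u v = - ((v - u) * eisenstein_norm v (-u) * (v * (u - 3) - 3 * (u + 6))
     * eisenstein_norm (-3 * (v + 6)) (u * (v - 3)) * eisenstein_norm (u * v - 3 * v) (-3 * u - 18)
     * eisenstein_norm (3 * u - 3 * v) (u * v + 3 * u - 18)
     * eisenstein_norm (-u * v - 3 * v - 3 * u) (-u * v - 18))"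
  unfolding hessian_j_diff_def hessian_c4_def hessian_disc_def eisenstein_norm_def by algebra

lemma hessian_j_diff_eq_0_no_omega:
  fixes u v :: "'a::field"
  assumes n3: "(3::'a) \<noteq> 0" and no: "\<And>x::'a. x^2 + x + 1 \<noteq> 0" and "hessian_j_diff u v = 0"
  shows "v = u \<or> v * (u - 3) = 3 * (u + 6) \<or> (u * v = -18 \<and> u + v = 6)"
proof -
  note norm = eisenstein_norm_eq_0_iff[OF no]
  have "(9::'a) \<noteq> 0" using power_not_zero[OF n3, of 2] by simp
  from assms(3) have "v - u = 0 \<or> eisenstein_norm v (-u) = 0 \<or> v * (u - 3) - 3 * (u + 6) = 0
      \<or> eisenstein_norm (-3 * (v + 6)) (u * (v - 3)) = 0
      \<or> eisenstein_norm (u * v - 3 * v) (-3 * u - 18) = 0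
      \<or> eisenstein_norm (3 * u - 3 * v) (u * v + 3 * u - 18) = 0
      \<or> eisenstein_norm (-u * v - 3 * v - 3 * u) (-u * v - 18) = 0"
    unfolding hessian_j_diff_factor neg_equal_0_iff_equal mult_eq_0_iff disj_assoc .
  then show ?thesis
  proof (elim disjE)
    assume "eisenstein_norm (-3 * (v + 6)) (u * (v - 3)) = 0"
    then have "-3 * (v + 6) = 0" and h: "u * (v - 3) = 0" using norm by simp_all
    then have "3 * (v + 6) = 0" by algebra
    then have "v + 6 = 0" using n3 by (metis mult_eq_0_iff)
    then have "v = -6" by (simp add: eq_neg_iff_add_eq_0)
    with h have "u = 0" using \<open>(9::'a) \<noteq> 0\<close> by simp
    with \<open>v = -6\<close> show ?thesis by simp
  next
    assume "eisenstein_norm (u * v - 3 * v) (-3 * u - 18) = 0"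
    then have "u * v - 3 * v = 0" "-3 * u - 18 = 0" using norm by simp_all
    then have "(u - 3) * v = 0" and "3 * (u + 6) = 0" by algebra+
    moreover from \<open>3 * (u + 6) = 0\<close> have "u = -6"
      using n3 by (metis mult_eq_0_iff eq_neg_iff_add_eq_0)
    ultimately show ?thesis using \<open>(9::'a) \<noteq> 0\<close> by simp
  next
    assume "eisenstein_norm (3 * u - 3 * v) (u * v + 3 * u - 18) = 0"
    then have "3 * (u - v) = 0" using norm by (simp add: algebra_simps)
    then show ?thesis using n3 by simp
  next
    assume "eisenstein_norm (-u * v - 3 * v - 3 * u) (-u * v - 18) = 0"
    then have "-u * v - 3 * v - 3 * u = 0 \<and> -u * v - 18 = 0" by (simp only: norm)
    then have "3 * (u + v - 6) = 0" and "u * v = -18" by algebra+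
    then have "u + v = 6" and "u * v = -18" using n3 by (metis mult_eq_0_iff eq_iff_diff_eq_0)+
    then show ?thesis by simp
  qed (use norm in auto)
qed

lemma hessian_c6_factor: "hessian_c6 u = (u^2 - 6*u - 18) * eisenstein_norm (u^2 + 18) (18 - 6*u)"
  unfolding hessian_c6_def eisenstein_norm_def by algebra

text \<open>The isomorphism would force \<open>-3\<close> to be a square.\<close>

lemma hessian_iso_flip_imp_eq:
  fixes u v :: "'a::field"
  assumes n3: "(3::'a) \<noteq> 0" and n2: "(2::'a) \<noteq> 0" and no: "\<And>x::'a. x^2 + x + 1 \<noteq> 0"
    and iso: "hessian_iso u v" and u: "u^3 \<noteq> 27" and flip: "v * (u - 3) = 3 * (u + 6)"
  shows "v = u"
proof (cases "hessian_c6 u = 0")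
  case True
  have "u \<noteq> 3" using u by auto
  moreover have "18 - 6 * u = - (2 * 3 * (u - 3))" by algebra
  ultimately have "18 - 6 * u \<noteq> 0" using n2 n3 by (metis mult_eq_0_iff neg_equal_0_iff_equal right_minus_eq)
  then have "u^2 - 6*u - 18 = 0"
    using True eisenstein_norm_eq_0_iff[OF no] unfolding hessian_c6_factor by auto
  then have "(v - u) * (u - 3) = 0" using flip by algebra
  then show ?thesis using \<open>u \<noteq> 3\<close> by simp
next
  case False
  obtain w where "w \<noteq> 0" and w: "w^6 * hessian_c6 v = hessian_c6 u"
    using hessian_iso_invariants[OF n3 iso] by blast
  have c6v: "hessian_c6 v * (u - 3)^6 = -19683 * hessian_c6 u"
    unfolding hessian_c6_def using flip by algebra
  have "hessian_c6 u * (u - 3)^6 = w^6 * (hessian_c6 v * (u - 3)^6)"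
    by (simp add: w[symmetric] mult.assoc)
  also have "\<dots> = hessian_c6 u * (-19683 * w^6)" unfolding c6v by (simp add: ac_simps)
  finally have "(u - 3)^6 = -19683 * w^6" using False by (metis mult_left_cancel)
  then have "((u - 3)^2)^3 = (-27 * w^2)^3" by algebra
  then have "(u - 3)^2 = -27 * w^2" by (rule cube_inj_if_no_omega[OF no])
  then have "(u - 3)^2 = -3 * (3 * w)^2" by algebra
  then have "3 * w = 0" by (rule minus_3_not_square_if_no_omega[OF n2 no])
  then show ?thesis using n3 \<open>w \<noteq> 0\<close> by simp
qed

text \<open>Solving the change-of-variables equations modulo 2 gives \<open>w = u + 1\<close>,
  \<open>r = s u + s\<^sup>2\<close> and finally a zero of the Eisenstein norm.\<close>

lemma hessian_iso_flip_imp_eq_char_2: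
  fixes u v :: "'a::field"
  assumes c2: "(2::'a) = 0" and no: "\<And>x::'a. x^2 + x + 1 \<noteq> 0"
    and iso: "hessian_iso u v" and flip: "v * (u - 3) = 3 * (u + 6)"
  shows "v = u"
proof -
  note char_2 = eq_if_diff_eq_char_multiple[OF c2]
  have n3: "(3::'a) \<noteq> 0"
  proof
    assume "(3::'a) = 0"
    then have "(3::'a) - 2 = 0" using c2 by simp
    then show False by simp
  qed
  have flip2: "v * (u + 1) = u"
  proof (rule char_2)
    show "v * (u + 1) - u = (v * (u - 3) - 3 * (u + 6)) + 2 * (2 * v + u + 9)" by algebra
  qed (use flip in simp)
  show ?thesis
  proof (cases "u = 0")
    case True
    then show ?thesis using flip2 by simp
  next
    case False
    from iso obtain r s t w where "w \<noteq> 0" and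
      e1: "w * (3 * v) = 3 * u + 2 * s" and
      e2: "w ^ 2 * (- 9 * v ^ 2) = - 9 * u ^ 2 - s * (3 * u) + 3 * r - s ^ 2" and
      e3: "w ^ 3 * (- 9 * (v ^ 3 - 27)) = - 9 * (u ^ 3 - 27) + r * (3 * u) + 2 * t"
      unfolding hessian_iso_def hessian_weier_char_neq_3[OF n3] weier_iso_iff by blast
    have wv: "w * v = u"
    proof (rule char_2)
      show "w * v - u = (w * (3 * v) - (3 * u + 2 * s)) + 2 * (s - w * v + u)" by algebra
    qed (use e1 in simp)
    have "v \<noteq> 0" using wv False by auto
    moreover have "(w - (u + 1)) * v = 0" using wv flip2 by (simp add: algebra_simps)
    ultimately have w: "w = u + 1" by simp
    have r: "r = s * u + s^2"
    proof (rule char_2)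
      show "r - (s * u + s^2) = (- (w^2 * (- 9 * v^2) - (- 9 * u^2 - s * (3 * u) + 3 * r - s^2))
          - 9 * (w * v - u) * (w * v + u)) + 2 * (- (r - s * u))" by algebra
    qed (use e2 wv in simp)
    have w3: "w^3 = 1 + r * u"
    proof (rule char_2)
      show "w^3 - (1 + r * u) = ((w^3 * (- 9 * (v^3 - 27)) - (- 9 * (u^3 - 27) + r * (3 * u) + 2 * t))
          + 9 * (w * v - u) * (w^2 * v^2 + w * v * u + u^2)) + 2 * (- 121 * w^3 + 121 + r * u + t)"
        by algebra
    qed (use e3 wv in simp)
    have "u * eisenstein_norm (s + 1) u = 0"
    proof (rule char_2)
      show "u * eisenstein_norm (s + 1) u - 0
          = ((1 + r * u) - w^3) + 2 * (s * u - s * u^2 + u^3 + u^2 + 2 * u)"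
        unfolding eisenstein_norm_def w r by algebra
    qed (use w3 in simp)
    then show ?thesis using False eisenstein_norm_eq_0_iff[OF no] by simp
  qed
qed

lemma hessian_iso_imp_eq_char_3:
  fixes u v :: "'a::field"
  assumes c3: "(3::'a) = 0" and iso: "hessian_iso u v" and u: "u^3 \<noteq> 27"
  shows "v = u"
proof -
  note char_3 = eq_if_diff_eq_char_multiple[OF c3]
  have "(27::'a) = 3 * 9" by simp
  then have "u \<noteq> 0" using u c3 by auto
  from iso obtain r s t w where "w \<noteq> 0" and
    e1: "w * v = u + 2 * s" and
    e2: "w ^ 2 * 0 = 0 - s * u + 3 * r - s ^ 2" and
    e3: "w ^ 3 * v ^ 2 = u ^ 2 + r * u + 2 * t" and
    e4: "w ^ 4 * 0 = 0 - s * u ^ 2 + 2 * r * 0 - (t + r * s) * u + 3 * r ^ 2 - 2 * s * t" and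
    e6: "w ^ 6 * 0 = 0 + r * 0 + r ^ 2 * 0 + r ^ 3 - t * u ^ 2 - t ^ 2 - r * t * u"
    unfolding hessian_iso_def hessian_weier_char_3[OF c3] weier_iso_iff by blast
  have "s * (u + s) = 0"
  proof (rule char_3)
    show "s * (u + s) - 0 = (w ^ 2 * 0 - (0 - s * u + 3 * r - s ^ 2)) + 3 * r" by algebra
  qed (use e2 in simp)
  then consider "s = 0" | "u + s = 0" by auto
  then show ?thesis
  proof cases
    case 1
    then have wv: "w * v = u" using e1 by simp
    have "t * u = 0"
    proof (rule char_3)
      show "t * u - 0 = ((w ^ 4 * 0 - (0 - s * u ^ 2 + 2 * r * 0 - (t + r * s) * u + 3 * r ^ 2
          - 2 * s * t)) - s * (u ^ 2 + r * u + 2 * t)) + 3 * r ^ 2" by algebra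
    qed (use e4 1 in simp)
    then have t: "t = 0" using \<open>u \<noteq> 0\<close> by simp
    have "r ^ 3 = 0"
    proof (rule char_3)
      show "r ^ 3 - 0 = (- (w ^ 6 * 0 - (0 + r * 0 + r ^ 2 * 0 + r ^ 3 - t * u ^ 2 - t ^ 2 - r * t * u))
          + t * (u ^ 2 + t + r * u)) + 3 * 0" by algebra
    qed (use e6 t in simp)
    then have "w ^ 3 * v ^ 2 = u ^ 2" using e3 t by simp
    then have "(w - 1) * (w ^ 2 * v ^ 2) = 0" using wv by algebra
    moreover have "v \<noteq> 0" using wv \<open>u \<noteq> 0\<close> by auto
    ultimately have "w = 1" using \<open>w \<noteq> 0\<close> by simp
    then show ?thesis using wv by simp
  next
    case 2
    then have wv: "w * v = - u" using e1 by algebra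
    have "u * (u ^ 2 + r * u + t) = 0"
    proof (rule char_3)
      show "u * (u ^ 2 + r * u + t) - 0 = (- (w ^ 4 * 0 - (0 - s * u ^ 2 + 2 * r * 0 - (t + r * s) * u
          + 3 * r ^ 2 - 2 * s * t)) + (u + s) * (u ^ 2 + r * u + 2 * t)) + 3 * (- (r ^ 2))" by algebra
    qed (use e4 2 in simp)
    then have "u ^ 2 + r * u + t = 0" using \<open>u \<noteq> 0\<close> by (metis mult_eq_0_iff)
    then have t: "t = - (u ^ 2) - r * u" by algebra
    have "u * (u * w + u + r) = 0" using e3 wv t by algebra
    then have "u * w + u + r = 0" using \<open>u \<noteq> 0\<close> by (metis mult_eq_0_iff)
    then have r: "r = - u * (w + 1)" by algebra
    have "u ^ 3 * (w + 1) ^ 3 = 0" using e6 t unfolding r by algebra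
    then have "w = -1" using \<open>u \<noteq> 0\<close> by (simp add: eq_neg_iff_add_eq_0)
    then show ?thesis using wv by simp
  qed
qed

lemma hessian_iso_imp_eq_if_sum_6_prod_minus_18:
  fixes u v :: "'a::field"
  assumes n3: "(3::'a) \<noteq> 0" and no: "\<And>x::'a. x^2 + x + 1 \<noteq> 0"
    and iso: "hessian_iso u v" and prod: "u * v = -18" and sum: "u + v = 6"
  shows "v = u"
proof (cases "(2::'a) = 0")
  case True
  show ?thesis
  proof (rule eq_if_diff_eq_char_multiple[OF True])
    show "v - u = (u + v - 6) + 2 * (3 - u)" by algebra
  qed (use sum in simp)
next
  case n2: False
  have v: "v = 6 - u" using sum by (simp add: algebra_simps)
  then have q: "u^2 - 6 * u - 18 = 0" using prod by algebra
  have "(2::'a)^2 * 3^4 \<noteq> 0" using n2 n3 by (metis mult_eq_0_iff power_not_zero)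
  then have "(324::'a) \<noteq> 0" by simp
  have "(27::'a) \<noteq> 0" using power_not_zero[OF n3, of 3] by simp
  have "hessian_c4 u = 324 * (2 * u + 3)" unfolding hessian_c4_def using q by algebra
  moreover have "2 * u + 3 \<noteq> 0"
  proof
    assume "2 * u + 3 = 0"
    moreover have "(2 * u + 3)^2 - 18 * (2 * u + 3) - 4 * (u^2 - 6 * u - 18) = 27"
      by (simp add: algebra_simps power2_eq_square)
    ultimately have "(27::'a) = 0" using q by simp
    with \<open>(27::'a) \<noteq> 0\<close> show False ..
  qed
  ultimately have c4u: "hessian_c4 u \<noteq> 0" using \<open>(324::'a) \<noteq> 0\<close> by (metis mult_eq_0_iff)
  obtain w where "w \<noteq> 0" and w: "w^4 * hessian_c4 v = hessian_c4 u"
    using hessian_iso_invariants[OF n3 iso] by blast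
  have c4v: "(2 * u + 3)^2 * hessian_c4 v = - 27 * hessian_c4 u"
    unfolding hessian_c4_def v using q by algebra
  have "hessian_c4 v * (2 * u + 3)^2 = hessian_c4 v * (-27 * w^4)"
    using c4v unfolding w[symmetric] by (simp add: ac_simps)
  moreover have "hessian_c4 v \<noteq> 0" using w c4u by auto
  ultimately have "(2 * u + 3)^2 = -27 * w^4" by (metis mult_left_cancel)
  then have "(2 * u + 3)^2 = -3 * (3 * w^2)^2" by algebra
  then have "3 * w^2 = 0" by (rule minus_3_not_square_if_no_omega[OF n2 no])
  then show ?thesis using n3 \<open>w \<noteq> 0\<close> by simp
qed

section \<open>Counting\<close>

lemma I_H_eq_singleton_char_3:
  assumes "(3::'a::field) = 0" and "u^3 \<noteq> 27"
  shows "I_H (u::'a) = {u}"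
  using assms hessian_iso_refl hessian_iso_imp_eq_char_3[OF assms(1)] unfolding I_H_def by blast

lemma I_H_eq_singleton_no_omega:
  fixes u :: "'a::field"
  assumes n3: "(3::'a) \<noteq> 0" and no: "\<And>x::'a. x^2 + x + 1 \<noteq> 0" and u: "u^3 \<noteq> 27"
  shows "I_H u = {u}"
proof -
  have "v = u" if iso: "hessian_iso u v" for v
  proof -
    have "hessian_j_diff u v = 0" by (rule hessian_j_diff_eq_0_if_iso[OF n3 iso])
    then consider "v = u" | "v * (u - 3) = 3 * (u + 6)" | "u * v = -18" "u + v = 6"
      using hessian_j_diff_eq_0_no_omega[OF n3 no] by blast
    then show ?thesis
    proof cases
      case 2
      then show ?thesis
        using hessian_iso_flip_imp_eq[OF n3 _ no iso u] hessian_iso_flip_imp_eq_char_2[OF _ no iso]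
        by blast
    next
      case 3
      then show ?thesis by (rule hessian_iso_imp_eq_if_sum_6_prod_minus_18[OF n3 no iso])
    qed
  qed
  then show ?thesis using u hessian_iso_refl unfolding I_H_def by blast
qed

lemma I_H_eq_orbit:
  fixes u \<omega> :: "'a::field"
  assumes n3: "(3::'a) \<noteq> 0" and om: "\<omega>^2 + \<omega> + 1 = 0" and u: "u^3 \<noteq> 27"
  shows "I_H u = hessian_orbit \<omega> u"
proof
  show "I_H u \<subseteq> hessian_orbit \<omega> u"
    using hessian_j_diff_eq_0_if_iso[OF n3] hessian_j_diff_eq_0_imp_orbit[OF om u]
    unfolding I_H_def by blast
qed (rule hessian_orbit_subset_I_H[OF assms])

lemma I_H_eq_j_diff_roots:
  fixes u \<omega> :: "'a::field"
  assumes n3: "(3::'a) \<noteq> 0" and om: "\<omega>^2 + \<omega> + 1 = 0" and u: "u^3 \<noteq> 27"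
  shows "I_H u = {v. v^3 \<noteq> 27 \<and> hessian_j_diff u v = 0}"
  using hessian_j_diff_eq_0_if_iso[OF n3] hessian_j_diff_eq_0_imp_orbit[OF om u]
    hessian_orbit_subset_I_H[OF assms] unfolding I_H_def by blast

lemma card_image_mult_cube_roots:
  fixes \<omega> :: "'a::field"
  assumes n3: "(3::'a) \<noteq> 0" and om: "\<omega>^2 + \<omega> + 1 = 0" and "finite X" and "0 \<notin> X"
    and cube_inj: "inj_on (\<lambda>x. x^3) X"
  shows "card ((\<lambda>(z, x). z * x) ` ({1, \<omega>, \<omega>^2} \<times> X)) = 3 * card X"
proof -
  have "inj_on (\<lambda>(z, x). z * x) ({1, \<omega>, \<omega>^2} \<times> X)"
  proof (rule inj_onI, clarify)
    fix z x z' x'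
    assume z: "z \<in> {1, \<omega>, \<omega>^2}" "z' \<in> {1, \<omega>, \<omega>^2}" and x: "x \<in> X" "x' \<in> X"
      and eq: "z * x = z' * x'"
    then have "(z * x)^3 = (z' * x')^3" by simp
    then have "x^3 = x'^3"
      using cube_roots_of_unity[OF om z(1)] cube_roots_of_unity[OF om z(2)]
      by (simp add: power_mult_distrib)
    then have "x = x'" using cube_inj x by (auto dest: inj_onD)
    then show "z = z' \<and> x = x'" using eq x \<open>0 \<notin> X\<close> by auto
  qed
  moreover have "card {1, \<omega>, \<omega>^2} = 3" using omega_distinct[OF n3 om] by auto
  ultimately show ?thesis by (simp add: card_image card_cartesian_product)
qed

text \<open>The twelve points of a generic orbit are distinct: a coincidence of cubes puts \<open>y\<close> at a
  fixed point of some element of the group, and these are roots of \<open>c4 \<cdot> c6 \<cdot> disc\<close>.\<close>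

lemma hessian_flip_cube_neq_cube:
  fixes y \<omega> :: "'a::field"
  assumes n3: "(3::'a) \<noteq> 0" and om: "\<omega>^2 + \<omega> + 1 = 0" and y: "y \<noteq> 3"
    and generic: "hessian_c4 y * hessian_c6 y * hessian_disc y \<noteq> 0"
  shows "hessian_flip y ^ 3 \<noteq> y ^ 3"
proof
  assume "hessian_flip y ^ 3 = y ^ 3"
  then obtain z where "z = 1 \<or> z = \<omega> \<or> z = \<omega>^2" and "hessian_flip y = z * y"
    using cube_eq_cube_iff_omega[OF om] by (metis insert_iff singletonD)
  moreover have "hessian_flip y * (y - 3) = 3 * (y + 6)" by (rule hessian_flip_eq[OF y])
  ultimately have "z = 1 \<or> z = \<omega> \<or> z = \<omega>^2" and "3 * (y + 6) = z * (y * (y - 3))"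
    by (auto simp: mult.assoc)
  then have "3 * (hessian_c4 y * hessian_c6 y * hessian_disc y) = 0"
    unfolding hessian_c4_def hessian_c6_def hessian_disc_def using om by algebra
  with n3 generic show False by simp
qed

lemma hessian_flip_cube_neq_flip_cube:
  fixes y z \<omega> :: "'a::field"
  assumes n3: "(3::'a) \<noteq> 0" and om: "\<omega>^2 + \<omega> + 1 = 0" and z: "z = \<omega> \<or> z = \<omega>^2"
    and y: "y \<noteq> 3" and zy: "z * y \<noteq> 3"
    and generic: "hessian_c4 y * hessian_c6 y * hessian_disc y \<noteq> 0"
  shows "hessian_flip y ^ 3 \<noteq> hessian_flip (z * y) ^ 3"
proof
  assume "hessian_flip y ^ 3 = hessian_flip (z * y) ^ 3"
  then obtain z' where z': "z' = 1 \<or> z' = \<omega> \<or> z' = \<omega>^2"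
    and "hessian_flip (z * y) = z' * hessian_flip y"
    using cube_eq_cube_iff_omega[OF om] by (metis insert_iff singletonD)
  moreover have "3 * ((z * y + 6) * (y - 3) - z' * ((y + 6) * (z * y - 3))) = 0"
    if "b * (z * y - 3) = 3 * (z * y + 6)" "a * (y - 3) = 3 * (y + 6)" "b = z' * a" for a b
    using that by algebra
  ultimately have "3 * ((z * y + 6) * (y - 3) - z' * ((y + 6) * (z * y - 3))) = 0"
    using hessian_flip_eq[OF y] hessian_flip_eq[OF zy] by blast
  then have "(z * y + 6) * (y - 3) = z' * ((y + 6) * (z * y - 3))" using n3 by simp
  then have "27 * (hessian_c4 y * hessian_c6 y * hessian_disc y) = 0"
    using z z' om unfolding hessian_c4_def hessian_c6_def hessian_disc_def by algebra
  moreover have "(27::'a) \<noteq> 0" using power_not_zero[OF n3, of 3] by simp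
  ultimately show False using generic by simp
qed

lemma hessian_invariants_mult_cube_root:
  fixes u z :: "'a::field"
  assumes "z^3 = 1"
  shows "hessian_c4 (z * u) = z * hessian_c4 u" and "hessian_c6 (z * u) = hessian_c6 u"
    and "hessian_disc (z * u) = hessian_disc u"
  unfolding hessian_c4_def hessian_c6_def hessian_disc_def using assms by algebra+

lemma hessian_generic_mult_cube_root:
  fixes u y :: "'a::field"
  assumes y: "y^3 = 1" and u: "u^3 \<noteq> 27"
    and c4: "hessian_c4 u \<noteq> 0" and c6: "hessian_c6 u \<noteq> 0"
  shows "y * u \<noteq> 3" and "hessian_c4 (y * u) * hessian_c6 (y * u) * hessian_disc (y * u) \<noteq> 0"
proof -
  have "(y * u)^3 = u^3" using y by (simp add: power_mult_distrib)
  with u show "y * u \<noteq> 3" by auto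
  have "y \<noteq> 0" using y by auto
  moreover have "hessian_disc u \<noteq> 0" using u by (simp add: hessian_disc_def)
  ultimately show "hessian_c4 (y * u) * hessian_c6 (y * u) * hessian_disc (y * u) \<noteq> 0"
    unfolding hessian_invariants_mult_cube_root[OF y] using c4 c6 by simp
qed

lemma hessian_orbit_representatives:
  fixes u \<omega> :: "'a::field"
  assumes n3: "(3::'a) \<noteq> 0" and om: "\<omega>^2 + \<omega> + 1 = 0" and u: "u^3 \<noteq> 27"
    and c4: "hessian_c4 u \<noteq> 0" and c6: "hessian_c6 u \<noteq> 0"
  defines "X \<equiv> insert u ((\<lambda>y. hessian_flip (y * u)) ` {1, \<omega>, \<omega>^2})"
  shows "0 \<notin> X" and "inj_on (\<lambda>x. x^3) X" and "card X = 4"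
proof -
  note generic = hessian_generic_mult_cube_root[OF cube_roots_of_unity[OF om] u c4 c6]
  have "u \<noteq> 0" using c4 by (auto simp: hessian_c4_def)
  have flip_neq_0: "hessian_flip (y * u) \<noteq> 0" if "y \<in> {1, \<omega>, \<omega>^2}" for y
  proof
    assume "hessian_flip (y * u) = 0"
    moreover have "hessian_flip (y * u) * (y * u - 3) = 3 * (y * u + 6)"
      by (rule hessian_flip_eq[OF generic(1)[OF that]])
    ultimately have "3 * (y * u + 6) = 0" by simp
    then have "y * u = -6" using n3 by (metis mult_eq_0_iff eq_neg_iff_add_eq_0)
    then have "hessian_c4 (y * u) = 0" by (simp add: hessian_c4_def)
    then show False using generic(2)[OF that] by simp
  qed
  show "0 \<notin> X"
  proof
    assume "0 \<in> X"
    then have "0 = u \<or> (\<exists>y \<in> {1, \<omega>, \<omega>^2}. 0 = hessian_flip (y * u))"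
      unfolding X_def by (simp only: insert_iff image_iff)
    then show False using \<open>u \<noteq> 0\<close> flip_neq_0 by metis
  qed
  have flip_cube: "hessian_flip (y * u) ^ 3 \<noteq> u ^ 3" if "y \<in> {1, \<omega>, \<omega>^2}" for y
    using hessian_flip_cube_neq_cube[OF n3 om generic[OF that]] cube_roots_of_unity[OF om that]
    by (simp add: power_mult_distrib)
  have flip_flip_cube: "hessian_flip (y * u) ^ 3 \<noteq> hessian_flip (z * (y * u)) ^ 3"
    if "y \<in> {1, \<omega>, \<omega>^2}" "z = \<omega> \<or> z = \<omega>^2" "z * y \<in> {1, \<omega>, \<omega>^2}" for y z
    using hessian_flip_cube_neq_flip_cube[OF n3 om that(2) generic(1)[OF that(1)] _ generic(2)[OF that(1)]]
      generic(1)[OF that(3)] by (simp add: mult.assoc)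
  have "\<omega>^3 = 1" by (rule omega_cube_eq_1[OF om])
  then have \<omega>\<omega>: "\<omega> * \<omega> = \<omega>^2" "\<omega> * \<omega>^2 = 1"
    by (simp_all add: power2_eq_square power3_eq_cube mult.assoc)
  have distinct: "hessian_flip u ^ 3 \<noteq> u ^ 3" "hessian_flip (\<omega> * u) ^ 3 \<noteq> u ^ 3"
    "hessian_flip (\<omega>^2 * u) ^ 3 \<noteq> u ^ 3"
    "hessian_flip u ^ 3 \<noteq> hessian_flip (\<omega> * u) ^ 3"
    "hessian_flip u ^ 3 \<noteq> hessian_flip (\<omega>^2 * u) ^ 3"
    "hessian_flip (\<omega> * u) ^ 3 \<noteq> hessian_flip (\<omega>^2 * u) ^ 3"
    subgoal using flip_cube[of 1] by simp
    subgoal using flip_cube[of \<omega>] by simp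
    subgoal using flip_cube[of "\<omega>^2"] by simp
    subgoal using flip_flip_cube[of 1 \<omega>] by simp
    subgoal using flip_flip_cube[of 1 "\<omega>^2"] by simp
    subgoal using flip_flip_cube[of \<omega> \<omega>] by (simp add: \<omega>\<omega> mult.assoc[symmetric])
    done
  show inj: "inj_on (\<lambda>x. x^3) X" using distinct unfolding X_def by (auto simp: inj_on_def)
  have "card ((\<lambda>x. x^3) ` X) = 4" using distinct unfolding X_def by simp
  then show "card X = 4" using inj by (simp add: card_image)
qed

lemma card_I_H_generic:
  fixes u \<omega> :: "'a::field"
  assumes n3: "(3::'a) \<noteq> 0" and om: "\<omega>^2 + \<omega> + 1 = 0" and u: "u^3 \<noteq> 27"
    and "hessian_c4 u \<noteq> 0" and "hessian_c6 u \<noteq> 0"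
  shows "card (I_H u) = 12"
proof -
  define X where "X = insert u ((\<lambda>y. hessian_flip (y * u)) ` {1, \<omega>, \<omega>^2})"
  note X = hessian_orbit_representatives[OF assms, folded X_def]
  have "card ((\<lambda>(z, x). z * x) ` ({1, \<omega>, \<omega>^2} \<times> X)) = 3 * card X"
    by (rule card_image_mult_cube_roots[OF n3 om _ X(1,2)]) (simp add: X_def)
  then show ?thesis unfolding I_H_eq_orbit[OF n3 om u] hessian_orbit_def X_def[symmetric] X(3) by simp
qed

lemma card_I_H_c4_eq_0:
  fixes u \<omega> :: "'a::field"
  assumes n3: "(3::'a) \<noteq> 0" and n2: "(2::'a) \<noteq> 0" and om: "\<omega>^2 + \<omega> + 1 = 0"
    and u: "u^3 \<noteq> 27" and c4: "hessian_c4 u = 0"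
  shows "card (I_H u) = 4"
proof -
  have "hessian_disc u \<noteq> 0" using u by (simp add: hessian_disc_def)
  then have j_diff: "hessian_j_diff u v = 0 \<longleftrightarrow> hessian_c4 v = 0" for v
    unfolding hessian_j_diff_def using c4 by simp
  have "(27::'a) \<noteq> 0" "(243::'a) \<noteq> 0"
    using power_not_zero[OF n3, of 3] power_not_zero[OF n3, of 5] by simp_all
  then have "v^3 \<noteq> 27" if "hessian_c4 v = 0" for v :: 'a
    using that unfolding hessian_c4_def by (auto simp: add_eq_0_iff2)
  then have "I_H u = {v. hessian_c4 v = 0}"
    unfolding I_H_eq_j_diff_roots[OF n3 om u] j_diff by blast
  also have "\<dots> = (\<lambda>z. - (6 * z)) ` {0, 1, \<omega>, \<omega>^2}"
  proof -
    have "hessian_c4 v = v * (v + 6) * (v + 6 * \<omega>) * (v + 6 * \<omega>^2)" for v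
      unfolding hessian_c4_def using om by algebra
    then show ?thesis by (auto simp: eq_neg_iff_add_eq_0)
  qed
  also have "card \<dots> = card {0, 1, \<omega>, \<omega>^2}"
  proof (rule card_image)
    have "(2::'a) * 3 \<noteq> 0" using n2 n3 by (metis mult_eq_0_iff)
    then show "inj_on (\<lambda>z. - (6 * z)) {0, 1, \<omega>, \<omega>^2}" by (simp add: inj_on_def)
  qed
  finally show ?thesis using omega_distinct[OF n3 om] by simp
qed

lemma hessian_c4_cube_sub_disc_cube: "hessian_c4 x ^ 3 - 1728 * hessian_disc x ^ 3 = hessian_c6 x ^ 2"
  unfolding hessian_c4_def hessian_c6_def hessian_disc_def by algebra

lemma card_I_H_c6_eq_0:
  fixes u \<omega> :: "'a::field"
  assumes n3: "(3::'a) \<noteq> 0" and n2: "(2::'a) \<noteq> 0" and om: "\<omega>^2 + \<omega> + 1 = 0"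
    and u: "u^3 \<noteq> 27" and c6: "hessian_c6 u = 0"
  shows "card (I_H u) = 6"
proof -
  note \<omega> = omega_distinct[OF n3 om]
  have "hessian_disc u \<noteq> 0" using u by (simp add: hessian_disc_def)
  moreover have "hessian_j_diff u v = - (hessian_disc u ^ 3 * hessian_c6 v ^ 2)" for v
  proof -
    have "hessian_c4 u ^ 3 = 1728 * hessian_disc u ^ 3"
      using hessian_c4_cube_sub_disc_cube[of u] c6 by simp
    moreover have "hessian_c4 v ^ 3 = hessian_c6 v ^ 2 + 1728 * hessian_disc v ^ 3"
      using hessian_c4_cube_sub_disc_cube[of v] by (simp add: algebra_simps)
    ultimately show ?thesis unfolding hessian_j_diff_def by (simp add: algebra_simps)
  qed
  ultimately have j_diff: "hessian_j_diff u v = 0 \<longleftrightarrow> hessian_c6 v = 0" for v by simp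
  have "v^3 \<noteq> 27" if "hessian_c6 v = 0" for v :: 'a
  proof
    assume "v^3 = 27"
    have "hessian_c6 v = (v^3)^2 - 540 * v^3 - 5832" unfolding hessian_c6_def by algebra
    also have "\<dots> = - (3^9)" unfolding \<open>v^3 = 27\<close> by simp
    finally show False using that power_not_zero[OF n3, of 9] by simp
  qed
  then have I: "I_H u = {v. hessian_c6 v = 0}"
    unfolding I_H_eq_j_diff_roots[OF n3 om u] j_diff by blast
  txt \<open>The roots of \<open>hessian_c6\<close> are \<open>z (3 \<pm> 3 s)\<close> with \<open>z^3 = 1\<close> and \<open>s^2 = 3\<close>.\<close>
  have "hessian_c6 u = (u^2 - 6 * u - 18) * (u^2 - 6 * \<omega> * u - 18 * \<omega>^2)
      * (u^2 - 6 * \<omega>^2 * u - 18 * (\<omega>^2)^2)"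
    unfolding hessian_c6_def using om by algebra
  then have "u^2 - 6 * u - 18 = 0 \<or> u^2 - 6 * \<omega> * u - 18 * \<omega>^2 = 0
      \<or> u^2 - 6 * \<omega>^2 * u - 18 * (\<omega>^2)^2 = 0"
    using c6 by (metis mult_eq_0_iff)
  then have "\<exists>z. z \<noteq> 0 \<and> u^2 - 6 * z * u - 18 * z^2 = 0"
    using \<omega>(1) by (elim disjE) (force intro: exI[of _ 1] exI[of _ \<omega>] exI[of _ "\<omega>^2"])+
  then obtain z where "z \<noteq> 0" and z: "u^2 - 6 * z * u - 18 * z^2 = 0" by blast
  define s where "s = (u - 3 * z) / (3 * z)"
  have "s * (3 * z) = u - 3 * z" unfolding s_def using \<open>z \<noteq> 0\<close> n3 by simp
  then have "9 * z^2 * (s^2 - 3) = 0" using z by algebra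
  then have s: "s^2 = 3" using \<open>z \<noteq> 0\<close> power_not_zero[OF n3, of 2] by simp
  define a b where "a = 3 + 3 * s" and "b = 3 - 3 * s"
  have "hessian_c6 x = (x - 1 * a) * (x - 1 * b) * (x - \<omega> * a) * (x - \<omega> * b)
      * (x - \<omega>^2 * a) * (x - \<omega>^2 * b)" for x
    unfolding hessian_c6_def a_def b_def using om s by algebra
  then have roots: "{v. hessian_c6 v = 0} = (\<lambda>(z, x). z * x) ` ({1, \<omega>, \<omega>^2} \<times> {a, b})"
    by (auto simp: mem_image_mult_Times_iff)
  have "(3::'a) \<noteq> 1"
  proof
    assume "(3::'a) = 1"
    then have "(3::'a) - 1 = 0" by simp
    with n2 show False by simp
  qed
  then have "s \<noteq> 1" "s \<noteq> -1" "s \<noteq> 0" using s n3 by auto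
  have "a = 3 * (s + 1)" "b = 3 * (1 - s)" unfolding a_def b_def by algebra+
  moreover have "s + 1 \<noteq> 0" "1 - s \<noteq> 0"
    using \<open>s \<noteq> 1\<close> \<open>s \<noteq> -1\<close> by (simp_all add: eq_neg_iff_add_eq_0[symmetric])
  ultimately have "a \<noteq> 0" "b \<noteq> 0" using n3 by (metis mult_eq_0_iff)+
  have "a^3 \<noteq> b^3"
  proof
    assume "a^3 = b^3"
    moreover have "a^3 - b^3 = 54 * s * (3 + s^2)" unfolding a_def b_def by algebra
    ultimately have "2^2 * 3^4 * s = 0" using s by simp
    then show False using n2 n3 \<open>s \<noteq> 0\<close> by (metis mult_eq_0_iff power_not_zero)
  qed
  then have "card ((\<lambda>(z, x). z * x) ` ({1, \<omega>, \<omega>^2} \<times> {a, b})) = 3 * card {a, b}"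
    using \<open>a \<noteq> 0\<close> \<open>b \<noteq> 0\<close> by (intro card_image_mult_cube_roots[OF n3 om]) auto
  moreover have "a \<noteq> b" using \<open>a^3 \<noteq> b^3\<close> by auto
  ultimately show ?thesis unfolding I roots by simp
qed

theorem mainTheorem11:
  fixes u :: "'a::{finite, field}"
  assumes "u ^ 3 \<noteq> 27"
  shows "(card (UNIV :: 'a set) mod 3 \<in> {0, 2} \<longrightarrow> card (I_H u) = 1)
       \<and> (card (UNIV :: 'a set) mod 3 = 1 \<and> CHAR('a) \<noteq> 2 \<and> A_coef u = 0 \<longrightarrow> card (I_H u) = 4)
       \<and> (card (UNIV :: 'a set) mod 3 = 1 \<and> CHAR('a) \<noteq> 2 \<and> B_coef u = 0 \<longrightarrow> card (I_H u) = 6)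
       \<and> (card (UNIV :: 'a set) mod 3 = 1 \<and> A_coef u * B_coef u \<noteq> 0 \<longrightarrow> card (I_H u) = 12)"
proof (cases "(3::'a) = 0")
  case True
  then show ?thesis
    using card_UNIV_mod_3_if_char_3[OF True] I_H_eq_singleton_char_3[OF True assms] by simp
next
  case n3: False
  show ?thesis
  proof (cases "\<exists>\<omega>::'a. \<omega>^2 + \<omega> + 1 = 0")
    case False
    then have no: "\<And>x::'a. x^2 + x + 1 \<noteq> 0" by blast
    show ?thesis
      using card_UNIV_mod_3_if_no_omega[OF no] I_H_eq_singleton_no_omega[OF n3 no assms] by simp
  next
    case True
    then obtain \<omega> :: 'a where om: "\<omega>^2 + \<omega> + 1 = 0" by blast
    note A = A_coef_eq_0_iff[OF n3] and B = B_coef_eq_0_iff[OF n3] and n2 = CHAR_eq_2_iff[where 'a = 'a]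
    have "CHAR('a) \<noteq> 2 \<and> A_coef u = 0 \<longrightarrow> card (I_H u) = 4"
      using card_I_H_c4_eq_0[OF n3 _ om assms] A n2 by blast
    moreover have "CHAR('a) \<noteq> 2 \<and> B_coef u = 0 \<longrightarrow> card (I_H u) = 6"
      using card_I_H_c6_eq_0[OF n3 _ om assms] B n2 by blast
    moreover have "A_coef u * B_coef u \<noteq> 0 \<longrightarrow> card (I_H u) = 12"
      using card_I_H_generic[OF n3 om assms] A B by simp
    ultimately show ?thesis using card_UNIV_mod_3_if_omega[OF n3 om] by simp
  qed
qed

end
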